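(* For any finite interval $\Lambda\subset\mathbb Z$, the map $\boldsymbol\sigma_\Lambda:\mathcal D_\Lambda\to\{0,1\}^\Lambda$ assigning to each VMD tiling its particle configuration is injective.
   Context: Tilings of a finite interval $\Lambda$: a tile occupies consecutive sites and carries a 0/1 word (its particle content): void $0$; monomer $100$; dimer $011000$; left boundary dimer $11000$ (allowed only as the first tile of $\Lambda$); and, allowed only as the last tile of $\Lambda$: right dimer $011$, right 1-monomer $1$, right 2-monomer $10$, truncated 1-dimer $0110$, truncated 2-dimer $01100$. A root tiling $R$ of $\Lambda$ is a tiling of $\Lambda$ by consecutive tiles consisting of voids and monomers, optionally with a left boundary dimer as first tile and optionally with one of right dimer, right 1-monomer, right 2-monomer as last tile; $\mathcal R_\Lambda$ denotes their set. A VMD tiling derived from $R$ is obtained by choosing a collection of disjoint pairs of consecutive tiles of $R$, each pair being either two monomers (replaced by a dimer) or a monomer followed by a right $j$-monomer, $j\in\{1,2\}$ (replaced by the truncated $j$-dimer); $\mathcal D_\Lambda(R)$ is the set of these and $\mathcal D_\Lambda=\bigcup_{R\in\mathcal R_\Lambda}\mathcal D_\Lambda(R)$. The configuration $\boldsymbol\sigma_\Lambda(\mathbf D)\in\{0,1\}^\Lambda$ of a tiling $\mathbf D$ is the concatenation of the particle contents of its tiles. *)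

theory Defs
  imports Main
begin

text \<open>Tile types. Particle contents: void 0; monomer 100; dimer 011000;
left boundary dimer 11000; right dimer 011; right 1-monomer 1;
right 2-monomer 10; truncated 1-dimer 0110; truncated 2-dimer 01100.\<close>

datatype tile = Void | Mono | Dimer | LDimer | RDimer | RMono1 | RMono2 | TDimer1 | TDimer2

fun word :: "tile \<Rightarrow> nat list" where
  "word Void = [0]"
| "word Mono = [1,0,0]"
| "word Dimer = [0,1,1,0,0,0]"
| "word LDimer = [1,1,0,0,0]"
| "word RDimer = [0,1,1]"
| "word RMono1 = [1]"
| "word RMono2 = [1,0]"
| "word TDimer1 = [0,1,1,0]"
| "word TDimer2 = [0,1,1,0,0]"

text \<open>The finite interval is \<open>\<Lambda> = {a..b} \<subseteq> \<int>\<close> (empty if b < a). A tiling is a list of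
tiles placed consecutively from the left end a; it tiles \<Lambda> iff the total length is |\<Lambda>|.\<close>

definition tlen :: "tile list \<Rightarrow> nat" where
  "tlen ts = length (concat (map word ts))"

definition bulk_tile :: "tile \<Rightarrow> bool" where
  "bulk_tile t \<longleftrightarrow> t = Void \<or> t = Mono"

definition right_root_tile :: "tile \<Rightarrow> bool" where
  "right_root_tile t \<longleftrightarrow> t = RDimer \<or> t = RMono1 \<or> t = RMono2"

definition root_tilings :: "int \<Rightarrow> int \<Rightarrow> tile list set" where
  "root_tilings a b = {R. tlen R = card {a..b} \<and>
     (\<exists>L M E. R = L @ M @ E \<and> (L = [] \<or> L = [LDimer]) \<and> (\<forall>t\<in>set M. bulk_tile t) \<and>
        (E = [] \<or> (\<exists>t. E = [t] \<and> right_root_tile t)))}"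

inductive derived :: "tile list \<Rightarrow> tile list \<Rightarrow> bool" where
  nil: "derived [] []"
| keep: "derived R D \<Longrightarrow> derived (t # R) (t # D)"
| dimer: "derived R D \<Longrightarrow> derived (Mono # Mono # R) (Dimer # D)"
| tdimer1: "derived R D \<Longrightarrow> derived (Mono # RMono1 # R) (TDimer1 # D)"
| tdimer2: "derived R D \<Longrightarrow> derived (Mono # RMono2 # R) (TDimer2 # D)"

definition VMD_tilings :: "int \<Rightarrow> int \<Rightarrow> tile list set" where
  "VMD_tilings a b = {D. \<exists>R \<in> root_tilings a b. derived R D}"

text \<open>Configuration \<open>\<sigma>_\<Lambda>(D) \<in> {0,1}^\<Lambda>\<close>, represented as a function on \<int> that is
the concatenated particle content on \<Lambda> (site a + k carries letter k) and 0 outside \<Lambda>.\<close>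

definition sigma :: "int \<Rightarrow> int \<Rightarrow> tile list \<Rightarrow> int \<Rightarrow> nat" where
  "sigma a b D = (\<lambda>i. if a \<le> i \<and> i \<le> b then concat (map word D) ! nat (i - a) else 0)"

end

theory Submission
  imports Defs
begin

text \<open>The configuration of a VMD tiling can be parsed back into the tiling from left to right.
A leading \<open>11000\<close> is the left boundary dimer, and no other tile content starts with \<open>11\<close>.
Hence a \<open>0\<close> followed by \<open>11\<close> opens a dimer, or, if only \<open>11\<close>, \<open>110\<close> or \<open>1100\<close> remains,
a right dimer or truncated dimer; any other \<open>0\<close> is a void. A \<open>1\<close> is a right 1- or 2-monomer
if only \<open>1\<close> or \<open>10\<close> remains, and a monomer otherwise. Since every VMD tiling has the shape
(left boundary dimer) (voids, monomers, dimers) (one right tile), this parser is a left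
inverse of the configuration map.\<close>

definition bulk_vmd_tile :: "tile \<Rightarrow> bool" where
  "bulk_vmd_tile t \<longleftrightarrow> t = Void \<or> t = Mono \<or> t = Dimer"

definition right_vmd_ends :: "tile list set" where
  "right_vmd_ends = {[], [RDimer], [RMono1], [RMono2], [TDimer1], [TDimer2]}"

inductive root_tail :: "tile list \<Rightarrow> bool" where
  root_end: "E = [] \<or> (\<exists>t. E = [t] \<and> right_root_tile t) \<Longrightarrow> root_tail E"
| root_cons: "bulk_tile t \<Longrightarrow> root_tail R \<Longrightarrow> root_tail (t # R)"

inductive vmd_tail :: "tile list \<Rightarrow> bool" where
  vmd_end: "E \<in> right_vmd_ends \<Longrightarrow> vmd_tail E"
| vmd_cons: "bulk_vmd_tile t \<Longrightarrow> vmd_tail D \<Longrightarrow> vmd_tail (t # D)"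

lemma root_tail_append:
  assumes "\<forall>t\<in>set M. bulk_tile t" and "E = [] \<or> (\<exists>t. E = [t] \<and> right_root_tile t)"
  shows "root_tail (M @ E)"
  using assms by (induction M) (auto intro: root_tail.intros)

lemma root_tail_Cons:
  "root_tail (t # R) \<longleftrightarrow> R = [] \<and> right_root_tile t \<or> bulk_tile t \<and> root_tail R"
  by (auto elim: root_tail.cases intro: root_tail.intros)

lemma derived_Nil_iff: "derived [] D \<longleftrightarrow> D = []"
  by (auto elim: derived.cases intro: derived.nil)

lemma derived_LDimer_Cons:
  assumes "derived (LDimer # R) D"
  obtains D' where "D = LDimer # D'" and "derived R D'"
  using assms by (auto elim: derived.cases)

lemma derived_root_tail_imp_vmd_tail:
  assumes "derived R D" and "root_tail R"
  shows "vmd_tail D"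
  using assms
proof (induction rule: derived.induct)
  case nil
  then show ?case by (simp add: vmd_end right_vmd_ends_def)
next
  case (keep R D t)
  from \<open>root_tail (t # R)\<close> show ?case
  proof cases
    case root_end
    then have "R = []" and "right_root_tile t" by auto
    with keep.hyps show ?thesis
      by (auto simp: derived_Nil_iff right_root_tile_def right_vmd_ends_def intro: vmd_end)
  next
    case root_cons
    with keep.IH show ?thesis by (auto simp: bulk_tile_def bulk_vmd_tile_def intro: vmd_cons)
  qed
next
  case (dimer R D)
  then have "root_tail R"
    by (simp add: root_tail_Cons right_root_tile_def)
  with dimer.IH show ?case by (simp add: bulk_vmd_tile_def vmd_cons)
next
  case (tdimer1 R D)
  then have "R = []"
    by (simp add: root_tail_Cons right_root_tile_def bulk_tile_def)
  with tdimer1.hyps show ?case by (simp add: derived_Nil_iff right_vmd_ends_def vmd_end)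
next
  case (tdimer2 R D)
  then have "R = []"
    by (simp add: root_tail_Cons right_root_tile_def bulk_tile_def)
  with tdimer2.hyps show ?case by (simp add: derived_Nil_iff right_vmd_ends_def vmd_end)
qed

lemma derived_tlen: "derived R D \<Longrightarrow> tlen D = tlen R"
  by (induction rule: derived.induct) (auto simp: tlen_def)

lemma VMD_tilings_tlen:
  assumes "D \<in> VMD_tilings a b"
  shows "tlen D = card {a..b}"
  using assms derived_tlen by (fastforce simp: VMD_tilings_def root_tilings_def)

lemma VMD_tilings_cases:
  assumes "D \<in> VMD_tilings a b"
  obtains D' where "D = D' \<or> D = LDimer # D'" and "vmd_tail D'"
proof -
  obtain R where "R \<in> root_tilings a b" and derived: "derived R D"
    using assms by (auto simp: VMD_tilings_def)
  then obtain L M E where R: "R = L @ M @ E" and L: "L = [] \<or> L = [LDimer]"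
    and "\<forall>t\<in>set M. bulk_tile t" and "E = [] \<or> (\<exists>t. E = [t] \<and> right_root_tile t)"
    by (auto simp: root_tilings_def)
  then have tail: "root_tail (M @ E)"
    by (simp add: root_tail_append)
  obtain D' where "D = D' \<or> D = LDimer # D'" and "derived (M @ E) D'"
    using L derived derived_LDimer_Cons unfolding R by (metis append_Cons append_Nil)
  with tail show thesis
    using that derived_root_tail_imp_vmd_tail by blast
qed

fun decode_tail :: "nat list \<Rightarrow> tile list" where
  "decode_tail [] = []"
| "decode_tail (x # xs) =
    (if x = 0 then
       (if take 2 xs = [1, 1] then
          (if xs = [1, 1] then [RDimer]
           else if xs = [1, 1, 0] then [TDimer1]
           else if xs = [1, 1, 0, 0] then [TDimer2]
           else Dimer # decode_tail (drop 5 xs))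
        else Void # decode_tail xs)
     else if xs = [] then [RMono1]
     else if xs = [0] then [RMono2]
     else Mono # decode_tail (drop 2 xs))"

definition decode :: "nat list \<Rightarrow> tile list" where
  "decode xs =
    (if take 5 xs = [1, 1, 0, 0, 0] then LDimer # decode_tail (drop 5 xs) else decode_tail xs)"

lemma vmd_tail_take2_ne_11:
  "vmd_tail D \<Longrightarrow> take 2 (concat (map word D)) \<noteq> [1, 1]"
  by (cases rule: vmd_tail.cases) (auto simp: right_vmd_ends_def bulk_vmd_tile_def)

lemma decode_tail_concat_word:
  "vmd_tail D \<Longrightarrow> decode_tail (concat (map word D)) = D"
proof (induction rule: vmd_tail.induct)
  case (vmd_end E)
  then show ?case by (auto simp: right_vmd_ends_def)
next
  case (vmd_cons t D)
  then show ?case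
    using vmd_tail_take2_ne_11[OF \<open>vmd_tail D\<close>] by (auto simp: bulk_vmd_tile_def)
qed

lemma decode_concat_word:
  assumes "vmd_tail D"
  shows "decode (concat (map word D)) = D"
    and "decode (concat (map word (LDimer # D))) = LDimer # D"
proof -
  have "take 5 (concat (map word D)) \<noteq> [1, 1, 0, 0, 0]"
  proof
    assume "take 5 (concat (map word D)) = [1, 1, 0, 0, 0]"
    then have "take 2 (take 5 (concat (map word D))) = [1, 1]"
      by simp
    with vmd_tail_take2_ne_11[OF assms] show False
      by simp
  qed
  then show "decode (concat (map word D)) = D"
    using decode_tail_concat_word[OF assms] by (simp add: decode_def)
  show "decode (concat (map word (LDimer # D))) = LDimer # D"
    using decode_tail_concat_word[OF assms] by (simp add: decode_def)
qed

lemma VMD_tilings_decode: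
  assumes "D \<in> VMD_tilings a b"
  shows "decode (concat (map word D)) = D"
proof -
  obtain D' where "D = D' \<or> D = LDimer # D'" and "vmd_tail D'"
    using assms by (rule VMD_tilings_cases)
  then show ?thesis
    using decode_concat_word by blast
qed

lemma sigma_eq_imp_concat_word_eq:
  assumes "sigma a b D1 = sigma a b D2"
    and "tlen D1 = card {a..b}" and "tlen D2 = card {a..b}"
  shows "concat (map word D1) = concat (map word D2)"
proof (rule nth_equalityI)
  show "length (concat (map word D1)) = length (concat (map word D2))"
    using assms(2,3) by (simp add: tlen_def)
next
  fix k assume "k < length (concat (map word D1))"
  then have "a \<le> a + int k" and "a + int k \<le> b"
    using assms(2) by (auto simp: tlen_def)
  moreover have "sigma a b D1 (a + int k) = sigma a b D2 (a + int k)"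
    using assms(1) by simp
  ultimately show "concat (map word D1) ! k = concat (map word D2) ! k"
    by (simp add: sigma_def)
qed

theorem lemma2p2:
  fixes a b :: int
  shows "inj_on (sigma a b) (VMD_tilings a b)"
proof (rule inj_onI)
  fix D1 D2
  assume D1: "D1 \<in> VMD_tilings a b" and D2: "D2 \<in> VMD_tilings a b"
    and "sigma a b D1 = sigma a b D2"
  with VMD_tilings_tlen[OF D1] VMD_tilings_tlen[OF D2]
  have "concat (map word D1) = concat (map word D2)"
    by (intro sigma_eq_imp_concat_word_eq)
  then show "D1 = D2"
    using VMD_tilings_decode[OF D1] VMD_tilings_decode[OF D2] by metis
qed

end
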